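(* In the setting described in the context, assume the Weyl tensor satisfies $|W|_g\leq\varepsilon$ on $M$ for some constant $0<\varepsilon\leq T=2\sqrt6$, assume $\phi_1(0)<1$, $\phi_1(0)\phi_2(0)<1$ and $1<\phi_1(0)+\phi_1(0)\phi_2(0)$, and assume there is $\delta_0\in(0,1)$ with $\phi_1(0),\phi_2(0)\geq\delta_0$. Then there is a constant $C=C(\delta_0)$ such that for $k=1,2$, $i=2,3$ and all $x\in[\frac34,1]$: $|y_1^{(k)}(x)|\leq C\varepsilon^2(1-x^2)^{4-k}$ and $|y_i^{(k)}(x)|\leq C\varepsilon(1-x^2)^{2-k}$.
   Context: Setting: $(M^4,g)$ is a Hadamard manifold (complete, simply connected, non-positive sectional curvature) which is conformally compact Einstein ($\mathrm{Ric}_g=-3g$, and $x^2g$ extends continuously to $\overline M$ for a boundary defining function $x$) with conformal infinity $(\mathbb{S}^3,[\hat g])$, $\hat g=\lambda_1\sigma_1^2+\lambda_2\sigma_2^2+\lambda_3\sigma_3^2$, where $\sigma_i$ are the standard left-invariant $1$-forms on $\mathrm{SU}(2)\cong\mathbb{S}^3$ and $\lambda_1,\lambda_2,\lambda_3>0$ are pairwise distinct. The conformal Killing fields of $\hat g$ extend to Killing fields of $g$ with a common fixed point $p_0\in M$; with $r$ the distance to $p_0$, $x=e^{-r}$ is a geodesic defining function, and along a geodesic ray $\theta=\theta_0$ from $p_0$, in polar coordinates $(x,\theta)$ with $d\theta^i=\sigma_i$ at $\theta_0$, $g=x^{-2}\big(dx^2+\tfrac{(1-x^2)^2}{4}\bar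 h\big)$, $\bar h=\sum_i I_i(d\theta^i)^2$, $I_i\in C^\infty([0,1])$ positive, $I_i(1)=1$. Set $K=I_1I_2I_3$, $\phi_1=I_2/I_1$, $\phi_2=I_3/I_2$, $y_1=\log K$, $y_2=\log\phi_1$, $y_3=\log\phi_2$. Then $K(0)<1$ and on $[0,1]$: $y_1''-x^{-1}(1+3x^2)(1-x^2)^{-1}y_1'+\frac16(y_1')^2+\frac13[(y_2')^2+y_2'y_3'+(y_3')^2]=0$; $y_1''-x^{-1}(5+7x^2)(1-x^2)^{-1}y_1'+\frac12(y_1')^2+16(1-x^2)^{-2}(3-\Upsilon)=0$ with $\Upsilon=K^{-1/3}[2(\phi_1^2\phi_2)^{1/3}+2(\phi_1^{-1}\phi_2)^{1/3}+2(\phi_1\phi_2^2)^{-1/3}-\phi_1^{-4/3}\phi_2^{-2/3}-\phi_1^{2/3}\phi_2^{-2/3}-\phi_1^{2/3}\phi_2^{4/3}]$; $y_2''-2x^{-1}(1+2x^2)(1-x^2)^{-1}y_2'+\frac12y_1'y_2'+32(1-x^2)^{-2}K^{-1/3}[\phi_1^{2/3}\phi_2^{1/3}-\phi_1^{-1/3}\phi_2^{1/3}-\phi_1^{2/3}\phi_2^{-2/3}+\phi_1^{-4/3}\phi_2^{-2/3}]=0$; $y_3''-2x^{-1}(1+2x^2)(1-x^2)^{-1}y_3'+\frac12y_1'y_3'+32(1-x^2)^{-2}K^{-1/3}[\phi_1^{-1/3}\phi_2^{1/3}-\phi_1^{-1/3}\phi_2^{-2/3}-\phi_1^{2/3}\phi_2^{4/3}+\phi_1^{2/3}\phi_2^{-2/3}]=0$;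 boundary conditions $\phi_1(0)=\lambda_2/\lambda_1$, $\phi_2(0)=\lambda_3/\lambda_2$, $K(1)=\phi_1(1)=\phi_2(1)=1$, $y_i'(0)=y_i'(1)=0$. $|W|_g$ denotes the pointwise norm of the Weyl tensor of $g$. *)

theory Defs
  imports "HOL-Analysis.Analysis"
begin

text \<open>Cohomogeneity-one (diagonal Bianchi IX) ansatz:
  g = x^-2 (dx^2 + (1-x^2)^2/4 * (I1 s1^2 + I2 s2^2 + I3 s3^2)),
  s_i the standard left-invariant 1-forms on SU(2), d s_i = 2 s_j /\ s_k (cyclic).
  Orthonormal frame: E0 = x d/dx, E_i = X_i / a_i, a_i = (1-x^2)/(2x) sqrt(I_i),
  X_i dual to s_i, so [X_j,X_k] = -2 eps_ijk X_i.\<close>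

definition Ivec :: "(real \<Rightarrow> real) \<Rightarrow> (real \<Rightarrow> real) \<Rightarrow> (real \<Rightarrow> real) \<Rightarrow> nat \<Rightarrow> real \<Rightarrow> real" where
  "Ivec I1 I2 I3 i = (if i = 1 then I1 else if i = 2 then I2 else I3)"

definition warp :: "(nat \<Rightarrow> real \<Rightarrow> real) \<Rightarrow> nat \<Rightarrow> real \<Rightarrow> real" where
  "warp I i x = (1 - x^2) / (2 * x) * sqrt (I i x)"

definition levi :: "nat \<Rightarrow> nat \<Rightarrow> nat \<Rightarrow> real" where
  "levi i j k = (if (i,j,k) \<in> {(1,2,3),(2,3,1),(3,1,2)} then 1
                 else if (i,j,k) \<in> {(1,3,2),(3,2,1),(2,1,3)} then -1 else 0)"

text \<open>Structure functions: [E_a,E_b] = sum_c (frameC I a b c x) E_c.\<close>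
definition frameC :: "(nat \<Rightarrow> real \<Rightarrow> real) \<Rightarrow> nat \<Rightarrow> nat \<Rightarrow> nat \<Rightarrow> real \<Rightarrow> real" where
  "frameC I a b c x =
     (if a = 0 \<and> b \<in> {1,2,3} \<and> c = b then - x * deriv (warp I b) x / warp I b x
      else if b = 0 \<and> a \<in> {1,2,3} \<and> c = a then x * deriv (warp I a) x / warp I a x
      else if a \<in> {1,2,3} \<and> b \<in> {1,2,3} \<and> c \<in> {1,2,3}
        then -2 * levi c a b * warp I c x / (warp I a x * warp I b x)
      else 0)"

text \<open>Connection coefficients g(nabla_{E_a} E_b, E_c) (Koszul formula).\<close>
definition Gam :: "(nat \<Rightarrow> real \<Rightarrow> real) \<Rightarrow> nat \<Rightarrow> nat \<Rightarrow> nat \<Rightarrow> real \<Rightarrow> real" where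
  "Gam I a b c x = (frameC I a b c x - frameC I b c a x + frameC I c a b x) / 2"

definition Eact :: "nat \<Rightarrow> (real \<Rightarrow> real) \<Rightarrow> real \<Rightarrow> real" where
  "Eact a f x = (if a = 0 then x * deriv f x else 0)"

text \<open>Riem a b c d = g(R(E_a,E_b)E_c, E_d), R(X,Y) = [nabla_X, nabla_Y] - nabla_[X,Y].\<close>
definition Riem :: "(nat \<Rightarrow> real \<Rightarrow> real) \<Rightarrow> nat \<Rightarrow> nat \<Rightarrow> nat \<Rightarrow> nat \<Rightarrow> real \<Rightarrow> real" where
  "Riem I a b c d x =
     Eact a (Gam I b c d) x - Eact b (Gam I a c d) x
     + (\<Sum>e<4. Gam I b c e x * Gam I a e d x - Gam I a c e x * Gam I b e d x)
     - (\<Sum>e<4. frameC I a b e x * Gam I e c d x)"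

definition Ricc :: "(nat \<Rightarrow> real \<Rightarrow> real) \<Rightarrow> nat \<Rightarrow> nat \<Rightarrow> real \<Rightarrow> real" where
  "Ricc I b c x = (\<Sum>a<4. Riem I a b c a x)"

definition Scal :: "(nat \<Rightarrow> real \<Rightarrow> real) \<Rightarrow> real \<Rightarrow> real" where
  "Scal I x = (\<Sum>b<4. Ricc I b b x)"

definition kd :: "nat \<Rightarrow> nat \<Rightarrow> real" where
  "kd a b = (if a = b then 1 else 0)"

definition Weyl :: "(nat \<Rightarrow> real \<Rightarrow> real) \<Rightarrow> nat \<Rightarrow> nat \<Rightarrow> nat \<Rightarrow> nat \<Rightarrow> real \<Rightarrow> real" where
  "Weyl I a b c d x = Riem I a b c d x
     - (Ricc I a d x * kd b c + Ricc I b c x * kd a d - Ricc I a c x * kd b d - Ricc I b d x * kd a c) / 2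
     + Scal I x / 6 * (kd a d * kd b c - kd a c * kd b d)"

definition weyl_norm :: "(nat \<Rightarrow> real \<Rightarrow> real) \<Rightarrow> real \<Rightarrow> real" where
  "weyl_norm I x = sqrt (\<Sum>a<4. \<Sum>b<4. \<Sum>c<4. \<Sum>d<4. (Weyl I a b c d x)^2)"

definition nonpos_sec :: "(nat \<Rightarrow> real \<Rightarrow> real) \<Rightarrow> real \<Rightarrow> bool" where
  "nonpos_sec I x \<longleftrightarrow> (\<forall>u v :: nat \<Rightarrow> real.
      (\<Sum>a<4. \<Sum>b<4. \<Sum>c<4. \<Sum>d<4. u a * v b * v c * u d * Riem I a b c d x) \<le> 0)"

definition smooth_fun :: "(real \<Rightarrow> real) \<Rightarrow> bool" where
  "smooth_fun f \<longleftrightarrow> (\<forall>k x. ((deriv ^^ k) f) differentiable (at x))"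

definition Kf :: "(real \<Rightarrow> real) \<Rightarrow> (real \<Rightarrow> real) \<Rightarrow> (real \<Rightarrow> real) \<Rightarrow> real \<Rightarrow> real" where
  "Kf I1 I2 I3 x = I1 x * I2 x * I3 x"

definition phi1 :: "(real \<Rightarrow> real) \<Rightarrow> (real \<Rightarrow> real) \<Rightarrow> real \<Rightarrow> real" where
  "phi1 I1 I2 x = I2 x / I1 x"

definition phi2 :: "(real \<Rightarrow> real) \<Rightarrow> (real \<Rightarrow> real) \<Rightarrow> real \<Rightarrow> real" where
  "phi2 I2 I3 x = I3 x / I2 x"

definition Ups :: "real \<Rightarrow> real \<Rightarrow> real \<Rightarrow> real" where
  "Ups K p1 p2 = K powr (-1/3) *
     (2 * (p1^2 * p2) powr (1/3) + 2 * (p2 / p1) powr (1/3) + 2 * (p1 * p2^2) powr (-1/3)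
      - p1 powr (-4/3) * p2 powr (-2/3) - p1 powr (2/3) * p2 powr (-2/3)
      - p1 powr (2/3) * p2 powr (4/3))"

end

(* Put z_i = I_i' / (2 I_i). In the orthonormal frame the Einstein condition turns each radial
   Weyl component into a Riccati equation
     x^2 z_i' - x (1 + 3x^2) / (1 - x^2) z_i + x^2 z_i^2 = W_0i0i,
   whose forcing is at most eps. The condition y'(1) = 0 gives z_i(1) = 0, and on [3/4, 1] a
   barrier argument traps z_i between the curves +-2 eps (1 - x^2); the equation then bounds z_i'
   by 16 eps. This already gives the estimates for y_2' = 2 (z_2 - z_1) and y_3' = 2 (z_3 - z_2).
   The first y_1-equation is linear in y_1' = 2 (z_1 + z_2 + z_3) with a source quadratic in the
   y_i', hence of size eps^2 (1 - x^2)^2; integrating it from x = 1 against the integrating factor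
   (1 - x^2)^2 / x yields the extra factor (1 - x^2)^3.
   Only the Einstein condition, the Weyl bound, that equation and y'(1) = 0 are used, so the
   constant does not depend on delta_0. *)

theory Submission
  imports Defs
begin

lemma smooth_fun_has_derivative:
  "smooth_fun f \<Longrightarrow> (f has_real_derivative deriv f x) (at x)"
  unfolding smooth_fun_def by (metis DERIV_deriv_iff_real_differentiable funpow_0)

lemma smooth_fun_deriv_has_derivative:
  "smooth_fun f \<Longrightarrow> (deriv f has_real_derivative deriv (deriv f) x) (at x)"
  unfolding smooth_fun_def
  by (metis DERIV_deriv_iff_real_differentiable funpow_0 funpow_Suc_right o_apply One_nat_def)

lemma smooth_fun_isCont_deriv2: "smooth_fun f \<Longrightarrow> isCont (deriv (deriv f)) x"
  unfolding smooth_fun_def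
  by (metis differentiable_imp_continuous_within funpow_0 funpow_Suc_right o_apply numeral_2_eq_2)

lemma smooth_fun_eventually_pos:
  assumes "smooth_fun f" "0 < f x"
  shows "\<forall>\<^sub>F s in nhds x. 0 < f s"
proof -
  have "isCont f x" using assms(1) by (rule DERIV_isCont[OF smooth_fun_has_derivative])
  then have "\<forall>\<^sub>F s in at x. 0 < f s"
    using assms(2) order_tendstoD(1) unfolding isCont_def by blast
  then show ?thesis using assms(2) by (simp add: eventually_nhds_conv_at)
qed

lemma DERIV_deriv_eventually:
  assumes "\<forall>\<^sub>F s in nhds x. (f has_real_derivative g s) (at s)"
    and "(g has_real_derivative D) (at x)"
  shows "(deriv f has_real_derivative D) (at x)"
proof -
  have "\<forall>\<^sub>F s in nhds x. deriv f s = g s"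
    using assms(1) by eventually_elim (rule DERIV_imp_deriv)
  then show ?thesis using assms(2) DERIV_cong_ev by blast
qed

lemma abs_bound_at_right_endpoint:
  fixes g h :: "real \<Rightarrow> real"
  assumes "a < b" "isCont g b" "isCont h b" "\<forall>t\<in>{a..<b}. \<bar>g t\<bar> \<le> h t"
  shows "\<bar>g b\<bar> \<le> h b"
proof (rule tendsto_le[of "at_left b"])
  show "((\<lambda>t. \<bar>g t\<bar>) \<longlongrightarrow> \<bar>g b\<bar>) (at_left b)"
    using assms(2) by (intro tendsto_intros) (simp add: isCont_def filterlim_at_split)
  show "(h \<longlongrightarrow> h b) (at_left b)"
    using assms(3) by (simp add: isCont_def filterlim_at_split)
  show "\<forall>\<^sub>F t in at_left b. \<bar>g t\<bar> \<le> h t"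
    using eventually_at_left_real[OF assms(1)] by eventually_elim (use assms(4) in auto)
qed simp

lemma barrier_principle:
  fixes d :: "real \<Rightarrow> real"
  assumes "a < c" and cont: "continuous_on {a..c} d" and "d c \<le> 0"
    and upward: "\<And>t. t \<in> {a..<c} \<Longrightarrow> d t = 0 \<Longrightarrow>
      \<exists>D>0. (d has_real_derivative D) (at t)"
    and not_pos_near_c: "\<And>a'. a \<le> a' \<Longrightarrow> a' < c \<Longrightarrow>
      \<not> (\<forall>t\<in>{a'..<c}. d t > 0)"
  shows "\<forall>t\<in>{a..c}. d t \<le> 0"
proof (rule ccontr)
  assume "\<not> ?thesis"
  then obtain x0 where x0: "a \<le> x0" "x0 < c" "d x0 > 0"
    using \<open>d c \<le> 0\<close> by (force simp: not_le less_le)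
  define Z where "Z = {x0..c} \<inter> d -` {0}"
  have cont0: "continuous_on {x0..c} d" using cont x0 by (auto elim: continuous_on_subset)
  have zero_between: "\<exists>u\<in>Z. u \<le> t" if t: "x0 \<le> t" "t \<le> c" "d t \<le> 0" for t
  proof -
    have "continuous_on {x0..t} d" using cont0 t by (auto elim: continuous_on_subset)
    then obtain u where "x0 \<le> u" "u \<le> t" "d u = 0"
      using IVT2'[of d t 0 x0] t x0 by auto
    then show ?thesis using t unfolding Z_def by auto
  qed
  have "closed Z" unfolding Z_def by (rule continuous_closed_preimage[OF cont0]) auto
  moreover have "Z \<noteq> {}" using zero_between[of c] x0 \<open>d c \<le> 0\<close> by auto
  moreover have bdd: "bdd_below Z" unfolding Z_def by (rule bdd_belowI[of _ x0]) auto
  ultimately have "Inf Z \<in> Z" using closed_contains_Inf by blast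
  define x1 where "x1 = Inf Z"
  have x1: "x0 < x1" "x1 \<le> c" "d x1 = 0"
    using \<open>Inf Z \<in> Z\<close> x0 unfolding Z_def x1_def by (auto simp: less_le)
  have pos: "d t > 0" if "x0 \<le> t" "t < x1" for t
    using zero_between[of t] cInf_lower[OF _ bdd] that x1 unfolding x1_def by force
  show False
  proof (cases "x1 < c")
    case True
    then obtain D where "D > 0" "(d has_real_derivative D) (at x1)"
      using upward[of x1] x1 x0 by auto
    then obtain \<delta> where \<delta>: "\<delta> > 0" "\<forall>h>0. h < \<delta> \<longrightarrow> d (x1 - h) < d x1"
      using DERIV_pos_inc_left by blast
    define h where "h = min (\<delta>/2) (x1 - x0)"
    have "0 < h" "h < \<delta>" "h \<le> x1 - x0" using \<delta> x1 by (auto simp: h_def)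
    then show False using \<delta>(2) pos[of "x1 - h"] x1 by force
  next
    case False
    then show False using pos not_pos_near_c[of x0] x0 x1 by force
  qed
qed

text \<open>\<open>half_log_deriv J = (ln (sqrt J))'\<close>; \<open>half_log_deriv'\<close> is its derivative written out,
  so that its continuity can be read off.\<close>

definition half_log_deriv :: "(real \<Rightarrow> real) \<Rightarrow> real \<Rightarrow> real" where
  "half_log_deriv J s = deriv J s / (2 * J s)"

definition half_log_deriv' :: "(real \<Rightarrow> real) \<Rightarrow> real \<Rightarrow> real" where
  "half_log_deriv' J s = (deriv (deriv J) s * J s - (deriv J s)^2) / (2 * (J s)^2)"

lemma half_log_deriv_has_derivative:
  "smooth_fun J \<Longrightarrow> 0 < J x \<Longrightarrow>
    (half_log_deriv J has_real_derivative half_log_deriv' J x) (at x)"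
  unfolding half_log_deriv_def[abs_def] half_log_deriv'_def
  using smooth_fun_has_derivative[of J x] smooth_fun_deriv_has_derivative[of J x]
  by (auto intro!: derivative_eq_intros simp: field_simps power2_eq_square)

lemma isCont_half_log_deriv':
  "smooth_fun J \<Longrightarrow> 0 < J x \<Longrightarrow> isCont (half_log_deriv' J) x"
  unfolding half_log_deriv'_def[abs_def]
  using smooth_fun_isCont_deriv2[of J x] DERIV_isCont[OF smooth_fun_deriv_has_derivative[of J x]]
    DERIV_isCont[OF smooth_fun_has_derivative[of J x]]
  by (auto intro!: continuous_intros)

lemma warp_has_derivative:
  assumes "0 < s" "smooth_fun (I i)" "0 < I i s"
  shows "(warp I i has_real_derivative
      -(1+s^2)/(2 * s^2) * sqrt (I i s) + (1-s^2)/(2 * s) * (deriv (I i) s / (2 * sqrt (I i s)))) (at s)"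
proof -
  have "((\<lambda>s. (1-s^2)/(2 * s)) has_real_derivative -(1+s^2)/(2 * s^2)) (at s)"
    using assms by (auto intro!: derivative_eq_intros simp: field_simps power2_eq_square)
  moreover have "((\<lambda>s. sqrt (I i s)) has_real_derivative deriv (I i) s / (2 * sqrt (I i s))) (at s)"
    using assms smooth_fun_has_derivative[of "I i" s] by (auto intro!: derivative_eq_intros simp: field_simps)
  ultimately show ?thesis unfolding warp_def[abs_def] by (rule DERIV_mult[THEN DERIV_cong]) (simp add: ac_simps)
qed

lemma warp_log_deriv:
  assumes "0 < s" "s < 1" "smooth_fun (I i)" "0 < I i s"
  shows "s * deriv (warp I i) s / warp I i s = -(1+s^2)/(1-s^2) + s * half_log_deriv (I i) s"
proof -
  define q where "q = sqrt (I i s)"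
  define r where "r = 1 - s^2"
  have q: "0 < q" "I i s = q^2" using assms by (simp_all add: q_def)
  have r: "0 < r" using assms by (simp add: r_def abs_square_less_1)
  have "s * deriv (warp I i) s / warp I i s
      = s * (-(1+s^2)/(2 * s^2) * q + r/(2 * s) * (deriv (I i) s/(2 * q))) / (r/(2 * s) * q)"
    unfolding DERIV_imp_deriv[OF warp_has_derivative[of s I i, OF assms(1,3,4)]] warp_def q_def r_def ..
  also have "\<dots> = -(1+s^2)/r + s * (deriv (I i) s/(2 * q^2))"
    using assms(1) q(1) r by (simp add: field_simps power2_eq_square)
  finally show ?thesis unfolding half_log_deriv_def q(2) r_def .
qed

text \<open>The singular coefficient shared by the Riccati equation for \<open>z\<^sub>i\<close> and the first
  equation for \<open>y\<^sub>1\<close>.\<close>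

definition riccati_coeff :: "real \<Rightarrow> real" where
  "riccati_coeff t = (1 + 3*t^2) / (t * (1 - t^2))"

lemma riccati_identity:
  fixes x z z' :: real
  assumes "x \<noteq> 0" "1 - x^2 \<noteq> 0"
  shows "x * (-4*x/(1-x^2)^2 + z + x * z') + (-(1+x^2)/(1-x^2) + x * z)^2 - 1
     = x^2 * (z' - riccati_coeff x * z + z^2)"
proof -
  define r where "r = 1 - x^2"
  have "x^2 = 1 - r" "r \<noteq> 0" using assms by (simp_all add: r_def)
  then show ?thesis unfolding riccati_coeff_def r_def[symmetric] using assms(1)
    by (simp add: field_simps power2_eq_square) algebra
qed

lemma Gam_i0i: "i \<in> {1,2,3} \<Longrightarrow> Gam I i 0 i x = x * deriv (warp I i) x / warp I i x"
  by (auto simp: Gam_def frameC_def)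

lemma Riem_0i0i:
  "i \<in> {1,2,3} \<Longrightarrow> Riem I 0 i 0 i x = x * deriv (Gam I i 0 i) x + (Gam I i 0 i x)^2"
  by (auto simp: Riem_def Eact_def eval_nat_numeral Gam_def frameC_def levi_def power2_eq_square)

lemma Weyl_0i0i:
  assumes "i \<in> {1,2,3}" and "\<forall>b<4. \<forall>c<4. Ricc I b c x = -3 * kd b c"
  shows "Weyl I 0 i 0 i x = Riem I 0 i 0 i x - 1"
proof -
  have "Scal I x = -12" using assms(2) by (simp add: Scal_def eval_nat_numeral kd_def)
  then show ?thesis using assms by (auto simp: Weyl_def kd_def)
qed

lemma abs_Weyl_le_weyl_norm:
  assumes "a < 4" "b < 4" "c < 4" "d < 4"
  shows "\<bar>Weyl I a b c d x\<bar> \<le> weyl_norm I x"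
proof -
  let ?W = "\<lambda>a b c d. (Weyl I a b c d x)^2"
  have "?W a b c d \<le> (\<Sum>d<4. ?W a b c d)"
    using assms by (intro member_le_sum) auto
  also have "\<dots> \<le> (\<Sum>c<4. \<Sum>d<4. ?W a b c d)"
    using assms by (intro member_le_sum[where f="\<lambda>c. \<Sum>d<4. ?W a b c d"] sum_nonneg) auto
  also have "\<dots> \<le> (\<Sum>b<4. \<Sum>c<4. \<Sum>d<4. ?W a b c d)"
    using assms by (intro member_le_sum[where f="\<lambda>b. \<Sum>c<4. \<Sum>d<4. ?W a b c d"] sum_nonneg) auto
  also have "\<dots> \<le> (\<Sum>a<4. \<Sum>b<4. \<Sum>c<4. \<Sum>d<4. ?W a b c d)"
    using assms by (intro member_le_sum[where f="\<lambda>a. \<Sum>b<4. \<Sum>c<4. \<Sum>d<4. ?W a b c d"] sum_nonneg) auto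
  finally show ?thesis unfolding weyl_norm_def by (metis real_sqrt_abs real_sqrt_le_mono)
qed

lemma Weyl_0i0i_riccati:
  assumes i: "i \<in> {1,2,3}" and x: "0 < x" "x < 1" and I: "smooth_fun (I i)" "0 < I i x"
    and einstein: "\<forall>b<4. \<forall>c<4. Ricc I b c x = -3 * kd b c"
  shows "half_log_deriv' (I i) x
    = Weyl I 0 i 0 i x / x^2 + riccati_coeff x * half_log_deriv (I i) x - (half_log_deriv (I i) x)^2"
proof -
  let ?z = "half_log_deriv (I i)"
  let ?g = "\<lambda>s. -(1+s^2)/(1-s^2) + s * ?z s"
  have r: "1 - x^2 \<noteq> 0" using x by (simp add: abs_square_eq_1)
  have "\<forall>\<^sub>F s in nhds x. s \<in> {0<..<1}"
    using x by (intro eventually_nhds_in_open) auto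
  then have Gam_eq: "\<forall>\<^sub>F s in nhds x. Gam I i 0 i s = ?g s"
    using smooth_fun_eventually_pos[OF I]
    by eventually_elim (simp add: Gam_i0i[OF i] warp_log_deriv[of _ I i, OF _ _ I(1)])
  have "(?g has_real_derivative -4*x/(1-x^2)^2 + ?z x + x * half_log_deriv' (I i) x) (at x)"
    using r half_log_deriv_has_derivative[OF I]
    by (auto intro!: derivative_eq_intros simp: field_simps power2_eq_square)
  then have dGam: "deriv (Gam I i 0 i) x = -4*x/(1-x^2)^2 + ?z x + x * half_log_deriv' (I i) x"
    using Gam_eq by (intro DERIV_imp_deriv) (simp add: DERIV_cong_ev)
  have "Weyl I 0 i 0 i x = x^2 * (half_log_deriv' (I i) x - riccati_coeff x * ?z x + (?z x)^2)"
    unfolding Weyl_0i0i[OF i einstein] Riem_0i0i[OF i] eventually_nhds_x_imp_x[OF Gam_eq] dGam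
    by (rule riccati_identity[OF _ r]) (use x in simp)
  then show ?thesis using x by (simp add: field_simps)
qed

lemma one_minus_sq_near_1:
  fixes t :: real
  assumes "3/4 \<le> t" "t < 1"
  shows "0 < 1 - t^2" "(1 - t^2)^2 \<le> 1/5" "1 / t^2 \<le> 2"
proof -
  have "9/16 \<le> t^2" using power_mono[of "3/4" t 2] assms by (simp add: power2_eq_square)
  moreover show "0 < 1 - t^2" using assms by (simp add: abs_square_less_1)
  ultimately have "(1 - t^2)^2 \<le> (7/16)^2" by (intro power_mono) auto
  then show "(1 - t^2)^2 \<le> 1/5" by (simp add: power2_eq_square)
  show "1 / t^2 \<le> 2" using \<open>9/16 \<le> t^2\<close> by (simp add: divide_le_eq)
qed

lemma riccati_coeff_bounds:
  fixes t :: real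
  assumes "3/4 \<le> t" "t < 1"
  shows "3 \<le> riccati_coeff t * (1 - t^2)" "riccati_coeff t * (1 - t^2) \<le> 5" "3 \<le> riccati_coeff t"
proof -
  have t: "0 < t" and r: "0 < 1 - t^2" "1 - t^2 \<le> 1"
    using assms one_minus_sq_near_1(1)[OF assms] by auto
  have eq: "riccati_coeff t * (1 - t^2) = (1 + 3*t^2) / t"
    using t r by (simp add: riccati_coeff_def)
  have "0 \<le> (t - 1/2)^2" by simp
  then have "3 * t \<le> 1 + 3*t^2" by (simp add: power2_eq_square algebra_simps)
  then show lower: "3 \<le> riccati_coeff t * (1 - t^2)" unfolding eq using t by (simp add: le_divide_eq)
  have "t * t \<le> t" using assms by (simp add: mult_le_cancel_left1)
  then have "1 + 3*t^2 \<le> 5 * t" using assms unfolding power2_eq_square by linarith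
  then show "riccati_coeff t * (1 - t^2) \<le> 5" unfolding eq using t by (simp add: divide_le_eq)
  have "0 \<le> riccati_coeff t" using t r by (simp add: riccati_coeff_def)
  then have "riccati_coeff t * (1 - t^2) \<le> riccati_coeff t"
    using r by (intro mult_left_le) auto
  then show "3 \<le> riccati_coeff t" using lower by linarith
qed

text \<open>Near \<open>t = 1\<close> the coefficient \<open>riccati_coeff t \<approx> 2 / (1 - t)\<close> dominates: it pushes \<open>z\<close> back
  inside the barriers \<open>\<plusminus>B (1 - t\<^sup>2)\<close> wherever it touches them, and it forbids \<open>z\<close> to stay
  beyond a barrier up to \<open>t = 1\<close>, where \<open>z\<close> vanishes.\<close>

context
  fixes z z' w :: "real \<Rightarrow> real" and B :: real
  assumes B: "0 < B" "B \<le> 10"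
    and has_deriv: "\<forall>t\<in>{3/4..1}. (z has_real_derivative z' t) (at t)"
    and riccati: "\<forall>t\<in>{3/4..<1}. z' t = w t + riccati_coeff t * z t - (z t)^2"
    and w_bound: "\<forall>t\<in>{3/4..<1}. \<bar>w t\<bar> \<le> B"
    and vanish_at_1: "z 1 = 0"
begin

lemma riccati_continuous_on: "continuous_on {3/4..1} z"
  using has_deriv by (meson DERIV_isCont continuous_at_imp_continuous_on)

lemma riccati_not_above_barrier_near_1:
  assumes a': "3/4 \<le> a'" "a' < 1"
  shows "\<not> (\<forall>t\<in>{a'..<1}. z t - B * (1 - t^2) > 0)"
proof
  assume above: "\<forall>t\<in>{a'..<1}. z t - B * (1 - t^2) > 0"
  have "isCont z 1" using has_deriv DERIV_isCont by force
  then have "\<forall>\<^sub>F t in at_left 1. z t < 1"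
    using vanish_at_1 order_tendstoD(2)[of z 0 "at_left 1" 1]
    by (simp add: isCont_def filterlim_at_split)
  then obtain b where "b < 1" and small: "\<forall>t. b < t \<and> t < 1 \<longrightarrow> z t < 1"
    by (auto simp: eventually_at_left_field)
  define t where "t = max a' ((b + 1) / 2)"
  have t: "a' \<le> t" "t < 1" "b < t" using a' \<open>b < 1\<close> by (auto simp: t_def less_max_iff_disj)
  obtain \<xi> where \<xi>: "t < \<xi>" "\<xi> < 1" "z 1 - z t = z' \<xi> * (1 - t)"
    using MVT2[of t 1 z z'] t a' has_deriv by auto
  have "z' \<xi> > 0"
  proof -
    have \<xi>_in: "\<xi> \<in> {3/4..<1}" using \<xi> t a' by auto
    let ?p = "riccati_coeff \<xi>"
    have p: "3 \<le> ?p * (1 - \<xi>^2)" "3 \<le> ?p" using riccati_coeff_bounds \<xi>_in by auto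
    have z: "B * (1 - \<xi>^2) < z \<xi>" "z \<xi> < 1" using above small \<xi> t by auto
    have "0 < B * (1 - \<xi>^2)" using B one_minus_sq_near_1(1)[of \<xi>] \<xi>_in by simp
    have "B * 3 \<le> B * (?p * (1 - \<xi>^2))" using p(1) B by (intro mult_left_mono) auto
    then have "2 * B \<le> (2/3) * (?p * (B * (1 - \<xi>^2)))"
      using mult.left_commute[of ?p B "1 - \<xi>^2"] by linarith
    also have "\<dots> \<le> (2/3) * (?p * z \<xi>)"
      using z p by (intro mult_left_mono) auto
    also have "\<dots> = z \<xi> * ((2/3) * ?p)" by simp
    also have "\<dots> \<le> z \<xi> * (?p - z \<xi>)"
      using z p \<open>0 < B * (1 - \<xi>^2)\<close> by (intro mult_left_mono) auto
    finally have "2 * B \<le> z \<xi> * (?p - z \<xi>)" .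
    moreover have "z' \<xi> = w \<xi> + z \<xi> * (?p - z \<xi>)" "- B \<le> w \<xi>"
      using riccati[rule_format, OF \<xi>_in] w_bound[rule_format, OF \<xi>_in]
      by (auto simp: algebra_simps power2_eq_square)
    ultimately show ?thesis using B by linarith
  qed
  then have "0 < z' \<xi> * (1 - t)" using \<xi> by simp
  then have "z t < 0" using \<xi>(3) vanish_at_1 by simp
  moreover have "0 < B * (1 - t^2)" using B one_minus_sq_near_1(1)[of t] t a' by simp
  ultimately show False using above t by force
qed

lemma riccati_upper_barrier: "\<forall>t\<in>{3/4..1}. z t - B * (1 - t^2) \<le> 0"
proof (rule barrier_principle)
  show "continuous_on {3/4..1} (\<lambda>t. z t - B * (1 - t^2))"
    by (intro continuous_intros riccati_continuous_on)
next
  fix t assume t: "t \<in> {3/4..<1::real}" and "z t - B * (1 - t^2) = 0"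
  then have zt: "z t = B * (1 - t^2)" by simp
  have "((\<lambda>t. z t - B * (1 - t^2)) has_real_derivative z' t + 2 * B * t) (at t)"
    using has_deriv t by (auto intro!: derivative_eq_intros simp: algebra_simps)
  moreover have "z' t + 2 * B * t > 0"
  proof -
    have "B * 3 \<le> B * (riccati_coeff t * (1 - t^2))"
      using riccati_coeff_bounds(1)[of t] t B by (intro mult_left_mono) auto
    moreover have "riccati_coeff t * z t = B * (riccati_coeff t * (1 - t^2))"
      by (simp add: zt mult.left_commute)
    moreover have "(z t)^2 \<le> 2 * B"
    proof -
      have "(z t)^2 = B * (B * (1 - t^2)^2)" by (simp add: zt power_mult_distrib power2_eq_square)
      also have "\<dots> \<le> B * (10 * (1/5))"
        using one_minus_sq_near_1(2)[of t] t B by (intro mult_left_mono mult_mono) auto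
      finally show ?thesis by simp
    qed
    moreover have "z' t = w t + riccati_coeff t * z t - (z t)^2" "- B \<le> w t"
      using riccati[rule_format, OF t] w_bound[rule_format, OF t] by auto
    moreover have "0 < 2 * B * t" using t B by simp
    ultimately show ?thesis by linarith
  qed
  ultimately show "\<exists>D>0. ((\<lambda>t. z t - B * (1 - t^2)) has_real_derivative D) (at t)" by blast
next
  fix a' :: real assume "3/4 \<le> a'" "a' < 1"
  then show "\<not> (\<forall>t\<in>{a'..<1}. z t - B * (1 - t^2) > 0)" by (rule riccati_not_above_barrier_near_1)
qed (use vanish_at_1 in auto)

lemma riccati_not_below_barrier_near_1:
  assumes a': "3/4 \<le> a'" "a' < 1"
  shows "\<not> (\<forall>t\<in>{a'..<1}. - z t - B * (1 - t^2) > 0)"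
proof
  assume below: "\<forall>t\<in>{a'..<1}. - z t - B * (1 - t^2) > 0"
  obtain \<xi> where \<xi>: "a' < \<xi>" "\<xi> < 1" "z 1 - z a' = z' \<xi> * (1 - a')"
    using MVT2[of a' 1 z z'] a' has_deriv by auto
  have "z' \<xi> < 0"
  proof -
    have \<xi>_in: "\<xi> \<in> {3/4..<1}" using \<xi> a' by auto
    let ?p = "riccati_coeff \<xi>"
    have p: "3 \<le> ?p * (1 - \<xi>^2)" "3 \<le> ?p" using riccati_coeff_bounds \<xi>_in by auto
    have "?p * z \<xi> \<le> ?p * - (B * (1 - \<xi>^2))"
      using below[rule_format, of \<xi>] \<xi> p by (intro mult_left_mono) auto
    moreover have "B * 3 \<le> B * (?p * (1 - \<xi>^2))" using p(1) B by (intro mult_left_mono) auto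
    moreover have "z' \<xi> = w \<xi> + ?p * z \<xi> - (z \<xi>)^2" "w \<xi> \<le> B"
      using riccati[rule_format, OF \<xi>_in] w_bound[rule_format, OF \<xi>_in] by auto
    ultimately show ?thesis using B mult.left_commute[of ?p B "1 - \<xi>^2"]
      by (smt (verit) mult_minus_right zero_le_power2)
  qed
  then have "z' \<xi> * (1 - a') < 0" using \<xi> by (simp add: mult_neg_pos)
  then have "0 < z a'" using \<xi>(3) vanish_at_1 by simp
  moreover have "0 < B * (1 - a'^2)" using B one_minus_sq_near_1(1)[of a'] a' by simp
  ultimately show False using below a' by force
qed

lemma riccati_lower_barrier: "\<forall>t\<in>{3/4..1}. - z t - B * (1 - t^2) \<le> 0"
proof (rule barrier_principle)
  show "continuous_on {3/4..1} (\<lambda>t. - z t - B * (1 - t^2))"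
    by (intro continuous_intros riccati_continuous_on)
next
  fix t assume t: "t \<in> {3/4..<1::real}" and "- z t - B * (1 - t^2) = 0"
  then have zt: "z t = - (B * (1 - t^2))" by simp
  have "((\<lambda>t. - z t - B * (1 - t^2)) has_real_derivative - z' t + 2 * B * t) (at t)"
    using has_deriv t by (auto intro!: derivative_eq_intros simp: algebra_simps)
  moreover have "- z' t + 2 * B * t > 0"
  proof -
    have "B * 3 \<le> B * (riccati_coeff t * (1 - t^2))"
      using riccati_coeff_bounds(1)[of t] t B by (intro mult_left_mono) auto
    moreover have "riccati_coeff t * z t = - (B * (riccati_coeff t * (1 - t^2)))"
      by (simp add: zt mult.left_commute)
    moreover have "z' t = w t + riccati_coeff t * z t - (z t)^2" "w t \<le> B"
      using riccati[rule_format, OF t] w_bound[rule_format, OF t] by auto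
    moreover have "0 \<le> 2 * B * t" using t B by simp
    ultimately show ?thesis using B by (smt (verit) zero_le_power2)
  qed
  ultimately show "\<exists>D>0. ((\<lambda>t. - z t - B * (1 - t^2)) has_real_derivative D) (at t)" by blast
next
  fix a' :: real assume "3/4 \<le> a'" "a' < 1"
  then show "\<not> (\<forall>t\<in>{a'..<1}. - z t - B * (1 - t^2) > 0)" by (rule riccati_not_below_barrier_near_1)
qed (use vanish_at_1 in auto)

lemma riccati_barrier: "t \<in> {3/4..1} \<Longrightarrow> \<bar>z t\<bar> \<le> B * (1 - t^2)"
  using riccati_upper_barrier riccati_lower_barrier by (auto simp: abs_le_iff)

lemma riccati_deriv_bound: "t \<in> {3/4..<1} \<Longrightarrow> \<bar>z' t\<bar> \<le> 8 * B"
proof -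
  assume t: "t \<in> {3/4..<1}"
  let ?p = "riccati_coeff t" and ?r = "1 - t^2"
  have p: "0 \<le> ?p" "?p * ?r \<le> 5" using riccati_coeff_bounds[of t] t by auto
  have z: "\<bar>z t\<bar> \<le> B * ?r" using riccati_barrier t by auto
  have "\<bar>?p * z t\<bar> \<le> ?p * (B * ?r)" using p z by (simp add: abs_mult mult_left_mono)
  also have "\<dots> = B * (?p * ?r)" by (rule mult.left_commute)
  also have "\<dots> \<le> B * 5" using p B by (intro mult_left_mono) auto
  finally have pz: "\<bar>?p * z t\<bar> \<le> 5 * B" by simp
  have "(z t)^2 \<le> (B * ?r)^2" using z by (metis abs_le_square_iff abs_of_nonneg abs_ge_zero order_trans)
  also have "\<dots> = B * (B * ?r^2)" by (simp add: power2_eq_square)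
  also have "\<dots> \<le> B * (10 * (1/5))"
    using one_minus_sq_near_1(2)[of t] t B by (intro mult_left_mono mult_mono) auto
  finally have "(z t)^2 \<le> 2 * B" by simp
  then show ?thesis using riccati[rule_format, OF t] w_bound[rule_format, OF t] pz
      zero_le_power2[of "z t"]
    unfolding abs_le_iff by linarith
qed

end

text \<open>The integrating factor of \<open>Y' = riccati_coeff * Y - S\<close>:
  \<open>(riccati_weight * Y)' = - riccati_weight * S\<close>.\<close>

definition riccati_weight :: "real \<Rightarrow> real" where
  "riccati_weight t = (1 - t^2)^2 / t"

lemma riccati_weight_has_derivative:
  "0 < t \<Longrightarrow> (riccati_weight has_real_derivative - ((1 - t^2) * (1 + 3*t^2) / t^2)) (at t)"
  unfolding riccati_weight_def[abs_def]
  by (auto intro!: derivative_eq_intros simp: field_simps power2_eq_square)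

lemma riccati_weight_mult_coeff:
  "3/4 \<le> t \<Longrightarrow> t < 1 \<Longrightarrow> riccati_weight t * riccati_coeff t = (1 - t^2) * (1 + 3*t^2) / t^2"
  using one_minus_sq_near_1(1)[of t] unfolding riccati_weight_def riccati_coeff_def
  by (simp add: field_simps power2_eq_square)

context
  fixes Y Y' S :: "real \<Rightarrow> real" and c :: real
  assumes has_deriv: "\<forall>t\<in>{3/4..1}. (Y has_real_derivative Y' t) (at t)"
    and linear: "\<forall>t\<in>{3/4..<1}. Y' t = riccati_coeff t * Y t - S t"
    and S_bound: "\<forall>t\<in>{3/4..<1}. \<bar>S t\<bar> \<le> c * (1 - t^2)^2"
    and vanish_at_1: "Y 1 = 0"
begin

lemma linear_decay_const_nonneg: "0 \<le> c"
proof -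
  have "\<bar>S (3/4)\<bar> \<le> c * (49/256)"
    using S_bound[rule_format, of "3/4"] by (simp add: power2_eq_square)
  then show ?thesis using abs_ge_zero[of "S (3/4)"] by linarith
qed

lemma weighted_mean_value:
  assumes x: "3/4 \<le> x" "x < 1"
  shows "\<exists>\<xi>. x < \<xi> \<and> \<xi> < 1 \<and> riccati_weight x * Y x = (1 - x) * riccati_weight \<xi> * S \<xi>"
proof -
  define \<mu>' where "\<mu>' t = - ((1 - t^2) * (1 + 3*t^2) / t^2)" for t :: real
  have "((\<lambda>t. riccati_weight t * Y t) has_real_derivative \<mu>' t * Y t + riccati_weight t * Y' t) (at t)"
    if "t \<in> {x..1}" for t
    using that x has_deriv riccati_weight_has_derivative[of t] unfolding \<mu>'_def
    by (auto intro!: derivative_eq_intros)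
  then obtain \<xi> where \<xi>: "x < \<xi>" "\<xi> < 1" and mvt: "riccati_weight 1 * Y 1 - riccati_weight x * Y x
      = (1 - x) * (\<mu>' \<xi> * Y \<xi> + riccati_weight \<xi> * Y' \<xi>)"
    using MVT2[of x 1 "\<lambda>t. riccati_weight t * Y t" "\<lambda>t. \<mu>' t * Y t + riccati_weight t * Y' t"] x
    by auto
  have \<xi>_in: "\<xi> \<in> {3/4..<1}" using x \<xi> by auto
  have "riccati_weight \<xi> * riccati_coeff \<xi> = - \<mu>' \<xi>"
    using riccati_weight_mult_coeff[of \<xi>] \<xi>_in unfolding \<mu>'_def by simp
  then have "\<mu>' \<xi> * Y \<xi> + riccati_weight \<xi> * Y' \<xi> = - (riccati_weight \<xi> * S \<xi>)"
    unfolding linear[rule_format, OF \<xi>_in] right_diff_distrib mult.assoc[symmetric] by simp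
  then show ?thesis using \<xi> mvt vanish_at_1 by auto
qed

lemma linear_decay: "\<forall>t\<in>{3/4..1}. \<bar>Y t\<bar> \<le> 2 * c * (1 - t^2)^3"
proof
  fix x :: real assume "x \<in> {3/4..1}"
  show "\<bar>Y x\<bar> \<le> 2 * c * (1 - x^2)^3"
  proof (cases "x = 1")
    case True
    then show ?thesis using vanish_at_1 by simp
  next
    case False
    with \<open>x \<in> {3/4..1}\<close> have x: "3/4 \<le> x" "x < 1" by auto
    then obtain \<xi> where \<xi>: "x < \<xi>" "\<xi> < 1"
      and eq: "riccati_weight x * Y x = (1 - x) * riccati_weight \<xi> * S \<xi>"
      using weighted_mean_value by blast
    have \<xi>_in: "\<xi> \<in> {3/4..<1}" using x \<xi> by auto
    have r: "0 < 1 - x^2" "0 \<le> 1 - \<xi>^2" "1 - \<xi>^2 \<le> 1 - x^2"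
      using x \<xi> one_minus_sq_near_1(1)[of \<xi>] one_minus_sq_near_1(1)[of x] power_mono[of x \<xi> 2]
      by auto
    have "1 - x \<le> 1 - x^2" using x by (simp add: power2_eq_square mult_le_cancel_left1)
    moreover have "riccati_weight \<xi> \<le> 2 * (1 - x^2)^2"
    proof -
      have "riccati_weight \<xi> \<le> (1 - \<xi>^2)^2 / (1/2)"
        unfolding riccati_weight_def using \<xi>_in by (intro divide_left_mono) auto
      also have "\<dots> \<le> 2 * (1 - x^2)^2" using r by (simp add: power_mono)
      finally show ?thesis .
    qed
    moreover have "\<bar>S \<xi>\<bar> \<le> c * (1 - x^2)^2"
    proof -
      have "c * (1 - \<xi>^2)^2 \<le> c * (1 - x^2)^2"
        using r linear_decay_const_nonneg by (intro mult_left_mono power_mono) auto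
      then show ?thesis using S_bound[rule_format, OF \<xi>_in] by linarith
    qed
    moreover have "0 \<le> riccati_weight \<xi>" using \<xi>_in by (simp add: riccati_weight_def)
    ultimately have weighted: "\<bar>riccati_weight x * Y x\<bar> \<le> (1 - x^2) * (2 * (1 - x^2)^2) * (c * (1 - x^2)^2)"
      unfolding eq using x by (simp add: abs_mult mult_mono)
    have "(1 - x^2)^2 * \<bar>Y x\<bar> \<le> riccati_weight x * \<bar>Y x\<bar>"
      unfolding riccati_weight_def using x
      by (intro mult_right_mono) (simp_all add: le_divide_eq mult_left_le)
    also have "\<dots> \<le> (1 - x^2) * (2 * (1 - x^2)^2) * (c * (1 - x^2)^2)"
      using weighted x by (simp add: abs_mult riccati_weight_def)
    also have "\<dots> = (1 - x^2)^2 * (2 * c * (1 - x^2)^3)"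
      by (simp add: power2_eq_square power3_eq_cube)
    finally show ?thesis using r by (simp add: mult_le_cancel_left)
  qed
qed

lemma linear_decay_deriv: "\<forall>t\<in>{3/4..<1}. \<bar>Y' t\<bar> \<le> 11 * c * (1 - t^2)^2"
proof
  fix t :: real assume t: "t \<in> {3/4..<1}"
  let ?p = "riccati_coeff t" and ?r = "1 - t^2"
  have p: "0 \<le> ?p" "?p * ?r \<le> 5" using riccati_coeff_bounds[of t] t by auto
  have "\<bar>?p * Y t\<bar> \<le> ?p * (2 * c * ?r^3)"
    using p linear_decay t by (simp add: abs_mult mult_left_mono)
  also have "\<dots> = (?p * ?r) * (2 * c * ?r^2)" by (simp add: power2_eq_square power3_eq_cube)
  also have "\<dots> \<le> 5 * (2 * c * ?r^2)"
    using p linear_decay_const_nonneg by (intro mult_right_mono) auto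
  finally show "\<bar>Y' t\<bar> \<le> 11 * c * ?r^2"
    using linear[rule_format, OF t] S_bound[rule_format, OF t] by (simp add: abs_le_iff)
qed

end

lemma half_log_deriv_decay:
  fixes I :: "nat \<Rightarrow> real \<Rightarrow> real" and \<epsilon> :: real
  assumes i: "i \<in> {1,2,3}" and I: "smooth_fun (I i)" "\<forall>t\<in>{3/4..1}. 0 < I i t"
    and einstein: "\<forall>x\<in>{3/4..<1}. \<forall>b<4. \<forall>c<4. Ricc I b c x = -3 * kd b c"
    and weyl: "\<forall>x\<in>{3/4..<1}. weyl_norm I x \<le> \<epsilon>"
    and \<epsilon>: "0 < \<epsilon>" "\<epsilon> \<le> 5"
    and vanish_at_1: "half_log_deriv (I i) 1 = 0"
  shows "\<forall>t\<in>{3/4..1}. \<bar>half_log_deriv (I i) t\<bar> \<le> 2 * \<epsilon> * (1 - t^2)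
    \<and> \<bar>half_log_deriv' (I i) t\<bar> \<le> 16 * \<epsilon>"
proof -
  let ?w = "\<lambda>t. Weyl I 0 i 0 i t / t^2"
  have has_deriv: "\<forall>t\<in>{3/4..1}. (half_log_deriv (I i) has_real_derivative half_log_deriv' (I i) t) (at t)"
    using half_log_deriv_has_derivative[OF I(1)] I(2) by auto
  have riccati: "\<forall>t\<in>{3/4..<1}.
      half_log_deriv' (I i) t = ?w t + riccati_coeff t * half_log_deriv (I i) t - (half_log_deriv (I i) t)^2"
    using Weyl_0i0i_riccati[of i _ I, OF i _ _ I(1)] I(2) einstein by auto
  have w_bound: "\<forall>t\<in>{3/4..<1}. \<bar>?w t\<bar> \<le> 2 * \<epsilon>"
  proof
    fix t :: real assume t: "t \<in> {3/4..<1}"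
    have "\<bar>Weyl I 0 i 0 i t\<bar> \<le> \<epsilon>"
      using abs_Weyl_le_weyl_norm[of 0 i 0 i I t] i weyl t by force
    then have "\<bar>Weyl I 0 i 0 i t\<bar> * (1 / t^2) \<le> \<epsilon> * 2"
      using one_minus_sq_near_1(3)[of t] t by (intro mult_mono) auto
    then show "\<bar>?w t\<bar> \<le> 2 * \<epsilon>" by (simp add: abs_divide)
  qed
  have "0 < 2 * \<epsilon>" "2 * \<epsilon> \<le> 10" using \<epsilon> by auto
  note riccati_lemmas = riccati_barrier[OF this has_deriv riccati w_bound vanish_at_1]
    riccati_deriv_bound[OF this has_deriv riccati w_bound vanish_at_1]
  have endpoint: "\<bar>half_log_deriv' (I i) 1\<bar> \<le> 16 * \<epsilon>"
    using abs_bound_at_right_endpoint[of "3/4" 1 "half_log_deriv' (I i)" "\<lambda>_. 16 * \<epsilon>"]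
      isCont_half_log_deriv'[OF I(1)] I(2) riccati_lemmas(2) by auto
  show ?thesis
  proof
    fix t :: real assume "t \<in> {3/4..1}"
    then show "\<bar>half_log_deriv (I i) t\<bar> \<le> 2 * \<epsilon> * (1 - t^2)
      \<and> \<bar>half_log_deriv' (I i) t\<bar> \<le> 16 * \<epsilon>"
      using riccati_lemmas endpoint vanish_at_1 by (cases "t = 1") auto
  qed
qed

lemma ln_Kf_has_derivative:
  assumes "smooth_fun I1" "smooth_fun I2" "smooth_fun I3" "0 < I1 t" "0 < I2 t" "0 < I3 t"
  shows "((\<lambda>x. ln (Kf I1 I2 I3 x)) has_real_derivative
    2 * (half_log_deriv I1 t + half_log_deriv I2 t + half_log_deriv I3 t)) (at t)"
  unfolding Kf_def half_log_deriv_def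
  using assms smooth_fun_has_derivative[of I1 t] smooth_fun_has_derivative[of I2 t]
    smooth_fun_has_derivative[of I3 t]
  by (auto intro!: derivative_eq_intros simp: field_simps)

lemma ln_phi1_has_derivative:
  assumes "smooth_fun I1" "smooth_fun I2" "0 < I1 t" "0 < I2 t"
  shows "((\<lambda>x. ln (phi1 I1 I2 x)) has_real_derivative 2 * (half_log_deriv I2 t - half_log_deriv I1 t)) (at t)"
  unfolding phi1_def half_log_deriv_def
  using assms smooth_fun_has_derivative[of I1 t] smooth_fun_has_derivative[of I2 t]
  by (auto intro!: derivative_eq_intros simp: field_simps power2_eq_square)

lemma ln_phi2_has_derivative:
  assumes "smooth_fun I2" "smooth_fun I3" "0 < I2 t" "0 < I3 t"
  shows "((\<lambda>x. ln (phi2 I2 I3 x)) has_real_derivative 2 * (half_log_deriv I3 t - half_log_deriv I2 t)) (at t)"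
  unfolding phi2_def half_log_deriv_def
  using assms smooth_fun_has_derivative[of I2 t] smooth_fun_has_derivative[of I3 t]
  by (auto intro!: derivative_eq_intros simp: field_simps power2_eq_square)

lemma Ivec_simps [simp]:
  "Ivec I1 I2 I3 1 = I1" "Ivec I1 I2 I3 (Suc 0) = I1" "Ivec I1 I2 I3 2 = I2" "Ivec I1 I2 I3 3 = I3"
  by (simp_all add: Ivec_def)

lemma quadratic_form_bound:
  fixes Y a b e :: real
  assumes "\<bar>Y\<bar> \<le> 12 * e" "\<bar>a\<bar> \<le> 8 * e" "\<bar>b\<bar> \<le> 8 * e"
  shows "\<bar>Y^2 / 6 + (a^2 + a * b + b^2) / 3\<bar> \<le> 88 * e^2"
proof -
  have sq: "Y^2 \<le> 144 * e^2" "a^2 \<le> 64 * e^2" "b^2 \<le> 64 * e^2"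
    using power_mono[OF assms(1), of 2] power_mono[OF assms(2), of 2] power_mono[OF assms(3), of 2]
    by (simp_all add: power_mult_distrib)
  have "\<bar>a * b\<bar> \<le> (8 * e) * (8 * e)" unfolding abs_mult using assms by (intro mult_mono) auto
  then have "a * b \<le> 64 * e^2" by (simp add: abs_le_iff power2_eq_square)
  moreover have "0 \<le> a^2 + a * b + b^2"
  proof -
    have "a^2 + a * b + b^2 = (a + b/2)^2 + 3/4 * b^2" by (simp add: power2_eq_square algebra_simps)
    then show ?thesis by simp
  qed
  ultimately show ?thesis using sq zero_le_power2[of Y] by (simp add: abs_le_iff field_simps)
qed

context
  fixes I1 I2 I3 y1 y2 y3 :: "real \<Rightarrow> real" and \<epsilon> :: real
  assumes smooth: "smooth_fun I1" "smooth_fun I2" "smooth_fun I3"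
    and pos: "\<forall>x\<in>{0..1}. 0 < I1 x \<and> 0 < I2 x \<and> 0 < I3 x"
    and y_defs: "y1 = (\<lambda>x. ln (Kf I1 I2 I3 x))" "y2 = (\<lambda>x. ln (phi1 I1 I2 x))"
      "y3 = (\<lambda>x. ln (phi2 I2 I3 x))"
    and einstein: "\<forall>x\<in>{0<..<1}. \<forall>b<4. \<forall>c<4. Ricc (Ivec I1 I2 I3) b c x = -3 * kd b c"
    and weyl: "\<forall>x\<in>{0<..<1}. weyl_norm (Ivec I1 I2 I3) x \<le> \<epsilon>"
    and \<epsilon>: "0 < \<epsilon>" "\<epsilon> \<le> 5"
    and y1_ode: "\<forall>x\<in>{0<..<1}.
          deriv (deriv y1) x - (1 + 3*x^2) / (x * (1 - x^2)) * deriv y1 x + (deriv y1 x)^2 / 6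
          + ((deriv y2 x)^2 + deriv y2 x * deriv y3 x + (deriv y3 x)^2) / 3 = 0"
    and critical_at_1: "deriv y1 1 = 0" "deriv y2 1 = 0" "deriv y3 1 = 0"
begin

abbreviation (input) z :: "nat \<Rightarrow> real \<Rightarrow> real" where
  "z i \<equiv> half_log_deriv (Ivec I1 I2 I3 i)"

abbreviation (input) z' :: "nat \<Rightarrow> real \<Rightarrow> real" where
  "z' i \<equiv> half_log_deriv' (Ivec I1 I2 I3 i)"

lemma deriv_y:
  assumes "t \<in> {0..1}"
  shows "deriv y1 t = 2 * (z 1 t + z 2 t + z 3 t)" "deriv y2 t = 2 * (z 2 t - z 1 t)"
    "deriv y3 t = 2 * (z 3 t - z 2 t)"
  using ln_Kf_has_derivative[OF smooth] ln_phi1_has_derivative[OF smooth(1,2)]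
    ln_phi2_has_derivative[OF smooth(2,3)] pos assms
  unfolding y_defs by (auto intro!: DERIV_imp_deriv)

lemma deriv_y_has_derivative:
  assumes "t \<in> {0..1}"
  shows "(deriv y1 has_real_derivative 2 * (z' 1 t + z' 2 t + z' 3 t)) (at t)"
    "(deriv y2 has_real_derivative 2 * (z' 2 t - z' 1 t)) (at t)"
    "(deriv y3 has_real_derivative 2 * (z' 3 t - z' 2 t)) (at t)"
proof -
  have I_t: "0 < I1 t" "0 < I2 t" "0 < I3 t" using pos assms by auto
  have "\<forall>\<^sub>F s in nhds t. 0 < I1 s \<and> 0 < I2 s \<and> 0 < I3 s"
    using smooth_fun_eventually_pos[OF smooth(1) I_t(1)] smooth_fun_eventually_pos[OF smooth(2) I_t(2)]
      smooth_fun_eventually_pos[OF smooth(3) I_t(3)] by (intro eventually_conj)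
  then have ev: "\<forall>\<^sub>F s in nhds t. (y1 has_real_derivative 2 * (z 1 s + z 2 s + z 3 s)) (at s)
      \<and> (y2 has_real_derivative 2 * (z 2 s - z 1 s)) (at s)
      \<and> (y3 has_real_derivative 2 * (z 3 s - z 2 s)) (at s)"
    by eventually_elim (unfold Ivec_simps y_defs, intro conjI ln_Kf_has_derivative
        ln_phi1_has_derivative ln_phi2_has_derivative, auto simp: smooth)
  have z: "(z 1 has_real_derivative z' 1 t) (at t)" "(z 2 has_real_derivative z' 2 t) (at t)"
    "(z 3 has_real_derivative z' 3 t) (at t)"
    using half_log_deriv_has_derivative smooth I_t by auto
  show "(deriv y1 has_real_derivative 2 * (z' 1 t + z' 2 t + z' 3 t)) (at t)"
    by (rule DERIV_deriv_eventually[OF eventually_mono[OF ev]])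
      (auto intro!: derivative_eq_intros z[simplified])
  show "(deriv y2 has_real_derivative 2 * (z' 2 t - z' 1 t)) (at t)"
    by (rule DERIV_deriv_eventually[OF eventually_mono[OF ev]])
      (auto intro!: derivative_eq_intros z[simplified])
  show "(deriv y3 has_real_derivative 2 * (z' 3 t - z' 2 t)) (at t)"
    by (rule DERIV_deriv_eventually[OF eventually_mono[OF ev]])
      (auto intro!: derivative_eq_intros z[simplified])
qed

lemma deriv2_y:
  assumes "t \<in> {0..1}"
  shows "deriv (deriv y1) t = 2 * (z' 1 t + z' 2 t + z' 3 t)" "deriv (deriv y2) t = 2 * (z' 2 t - z' 1 t)"
    "deriv (deriv y3) t = 2 * (z' 3 t - z' 2 t)"
  using deriv_y_has_derivative[OF assms] by (auto intro: DERIV_imp_deriv)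

lemma half_log_deriv_vanish_at_1: "z 1 1 = 0" "z 2 1 = 0" "z 3 1 = 0"
  using deriv_y[of 1] critical_at_1 by auto

lemma half_log_deriv_bounds:
  assumes "i \<in> {1,2,3}" "t \<in> {3/4..1}"
  shows "\<bar>z i t\<bar> \<le> 2 * \<epsilon> * (1 - t^2)" "\<bar>z' i t\<bar> \<le> 16 * \<epsilon>"
proof -
  have "smooth_fun (Ivec I1 I2 I3 i)" "\<forall>t\<in>{3/4..1}. 0 < Ivec I1 I2 I3 i t" "z i 1 = 0"
    using assms(1) smooth pos half_log_deriv_vanish_at_1 by auto
  moreover have "\<forall>x\<in>{3/4..<1}. \<forall>b<4. \<forall>c<4. Ricc (Ivec I1 I2 I3) b c x = -3 * kd b c"
    "\<forall>x\<in>{3/4..<1}. weyl_norm (Ivec I1 I2 I3) x \<le> \<epsilon>"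
    using einstein weyl by auto
  ultimately show "\<bar>z i t\<bar> \<le> 2 * \<epsilon> * (1 - t^2)" "\<bar>z' i t\<bar> \<le> 16 * \<epsilon>"
    using half_log_deriv_decay[OF assms(1) _ _ _ _ \<epsilon>] assms(2) by blast+
qed

lemma deriv_y_bounds:
  assumes "t \<in> {3/4..1}"
  shows "\<bar>deriv y1 t\<bar> \<le> 12 * (\<epsilon> * (1 - t^2))"
    "\<bar>deriv y2 t\<bar> \<le> 8 * (\<epsilon> * (1 - t^2))"
    "\<bar>deriv y3 t\<bar> \<le> 8 * (\<epsilon> * (1 - t^2))"
    "\<bar>deriv (deriv y2) t\<bar> \<le> 64 * \<epsilon>" "\<bar>deriv (deriv y3) t\<bar> \<le> 64 * \<epsilon>"
  using half_log_deriv_bounds[of 1 t] half_log_deriv_bounds[of 2 t] half_log_deriv_bounds[of 3 t]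
    deriv_y[of t] deriv2_y[of t] assms
  by (auto simp: abs_le_iff)

lemma deriv_y1_decay:
  assumes "t \<in> {3/4..1}"
  shows "\<bar>deriv y1 t\<bar> \<le> 176 * \<epsilon>^2 * (1 - t^2)^3"
    "\<bar>deriv (deriv y1) t\<bar> \<le> 968 * \<epsilon>^2 * (1 - t^2)^2"
proof -
  define S where "S t = (deriv y1 t)^2 / 6 + ((deriv y2 t)^2 + deriv y2 t * deriv y3 t + (deriv y3 t)^2) / 3"
    for t
  have has_deriv: "\<forall>t\<in>{3/4..1}. (deriv y1 has_real_derivative deriv (deriv y1) t) (at t)"
    using deriv_y_has_derivative(1) deriv2_y(1) by auto
  have linear: "\<forall>t\<in>{3/4..<1}. deriv (deriv y1) t = riccati_coeff t * deriv y1 t - S t"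
    using y1_ode unfolding S_def riccati_coeff_def by (auto simp: algebra_simps)
  have S_bound: "\<forall>t\<in>{3/4..<1}. \<bar>S t\<bar> \<le> 88 * \<epsilon>^2 * (1 - t^2)^2"
  proof
    fix t :: real assume "t \<in> {3/4..<1}"
    then have "\<bar>S t\<bar> \<le> 88 * (\<epsilon> * (1 - t^2))^2"
      unfolding S_def by (intro quadratic_form_bound deriv_y_bounds) auto
    then show "\<bar>S t\<bar> \<le> 88 * \<epsilon>^2 * (1 - t^2)^2" by (simp add: power_mult_distrib)
  qed
  note decay = linear_decay[OF has_deriv linear S_bound critical_at_1(1)]
    linear_decay_deriv[OF has_deriv linear S_bound critical_at_1(1)]
  show "\<bar>deriv y1 t\<bar> \<le> 176 * \<epsilon>^2 * (1 - t^2)^3" using decay(1) assms by auto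
  have "\<bar>2 * (z' 1 1 + z' 2 1 + z' 3 1)\<bar> \<le> 968 * \<epsilon>^2 * (1 - 1^2)^2"
  proof (rule abs_bound_at_right_endpoint[of "3/4" 1 "\<lambda>t. 2 * (z' 1 t + z' 2 t + z' 3 t)"
        "\<lambda>t. 968 * \<epsilon>^2 * (1 - t^2)^2"])
    show "isCont (\<lambda>t. 2 * (z' 1 t + z' 2 t + z' 3 t)) 1"
      using isCont_half_log_deriv' smooth pos by (auto intro!: continuous_intros)
    show "\<forall>t\<in>{3/4..<1}. \<bar>2 * (z' 1 t + z' 2 t + z' 3 t)\<bar> \<le> 968 * \<epsilon>^2 * (1 - t^2)^2"
      using decay(2) deriv2_y(1) by auto
  qed auto
  then show "\<bar>deriv (deriv y1) t\<bar> \<le> 968 * \<epsilon>^2 * (1 - t^2)^2"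
    using decay(2) deriv2_y(1)[of 1] assms by (cases "t = 1") auto
qed

lemma log_derivative_decay:
  "\<forall>k\<in>{1,2::nat}. \<forall>x\<in>{3/4..1::real}.
      \<bar>(deriv ^^ k) y1 x\<bar> \<le> 1000 * \<epsilon>^2 * (1 - x^2)^(4 - k)
    \<and> \<bar>(deriv ^^ k) y2 x\<bar> \<le> 1000 * \<epsilon> * (1 - x^2)^(2 - k)
    \<and> \<bar>(deriv ^^ k) y3 x\<bar> \<le> 1000 * \<epsilon> * (1 - x^2)^(2 - k)"
proof (intro ballI)
  fix k :: nat and x :: real assume k: "k \<in> {1,2}" and x: "x \<in> {3/4..1}"
  have r: "0 \<le> 1 - x^2" using x by (simp add: power_le_one)
  have "0 \<le> \<epsilon>^2 * (1 - x^2)^2" "0 \<le> \<epsilon> * (1 - x^2)" using r \<epsilon> by simp_all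
  then have "176 * (\<epsilon>^2 * (1 - x^2)^2 * (1 - x^2)) \<le> 1000 * (\<epsilon>^2 * (1 - x^2)^2 * (1 - x^2))"
    "968 * (\<epsilon>^2 * (1 - x^2)^2) \<le> 1000 * (\<epsilon>^2 * (1 - x^2)^2)"
    "8 * (\<epsilon> * (1 - x^2)) \<le> 1000 * (\<epsilon> * (1 - x^2))"
    using r by (simp_all add: mult_right_mono)
  with k show "\<bar>(deriv ^^ k) y1 x\<bar> \<le> 1000 * \<epsilon>^2 * (1 - x^2)^(4 - k)
    \<and> \<bar>(deriv ^^ k) y2 x\<bar> \<le> 1000 * \<epsilon> * (1 - x^2)^(2 - k)
    \<and> \<bar>(deriv ^^ k) y3 x\<bar> \<le> 1000 * \<epsilon> * (1 - x^2)^(2 - k)"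
    using deriv_y1_decay[OF x] deriv_y_bounds[OF x] \<epsilon>
    by (auto simp: numeral_2_eq_2 numeral_3_eq_3 power_Suc2 mult.assoc)
qed

end

lemma two_sqrt_6_le_5: "2 * sqrt 6 \<le> (5::real)"
proof -
  have "sqrt 6 \<le> sqrt ((5/2)^2)" by (rule real_sqrt_le_mono) (simp add: power2_eq_square)
  then show ?thesis by simp
qed

theorem lemma3p3:
  fixes \<delta>0 :: real
  assumes \<delta>0: "0 < \<delta>0" "\<delta>0 < 1"
  shows "\<exists>C::real. \<forall>(I1::real \<Rightarrow> real) (I2::real \<Rightarrow> real) (I3::real \<Rightarrow> real)
                       (lam1::real) (lam2::real) (lam3::real) (\<epsilon>::real)
                       (y1::real \<Rightarrow> real) (y2::real \<Rightarrow> real) (y3::real \<Rightarrow> real).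
    (\<comment> \<open>conformal infinity data\<close>
     0 < lam1 \<and> 0 < lam2 \<and> 0 < lam3 \<and> lam1 \<noteq> lam2 \<and> lam2 \<noteq> lam3 \<and> lam1 \<noteq> lam3
     \<comment> \<open>the coefficient functions\<close>
     \<and> smooth_fun I1 \<and> smooth_fun I2 \<and> smooth_fun I3
     \<and> (\<forall>x\<in>{0..1}. 0 < I1 x \<and> 0 < I2 x \<and> 0 < I3 x)
     \<and> I1 1 = 1 \<and> I2 1 = 1 \<and> I3 1 = 1
     \<and> y1 = (\<lambda>x. ln (Kf I1 I2 I3 x)) \<and> y2 = (\<lambda>x. ln (phi1 I1 I2 x)) \<and> y3 = (\<lambda>x. ln (phi2 I2 I3 x))
     \<comment> \<open>geometric properties of g: Einstein, non-positive sectional curvature\<close>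
     \<and> (\<forall>x\<in>{0<..<1}. \<forall>b<4. \<forall>c<4. Ricc (Ivec I1 I2 I3) b c x = -3 * kd b c)
     \<and> (\<forall>x\<in>{0<..<1}. nonpos_sec (Ivec I1 I2 I3) x)
     \<comment> \<open>consequences stated in the setting\<close>
     \<and> Kf I1 I2 I3 0 < 1
     \<and> (\<forall>x\<in>{0<..<1}.
          deriv (deriv y1) x - (1 + 3*x^2) / (x * (1 - x^2)) * deriv y1 x + (deriv y1 x)^2 / 6
          + ((deriv y2 x)^2 + deriv y2 x * deriv y3 x + (deriv y3 x)^2) / 3 = 0)
     \<and> (\<forall>x\<in>{0<..<1}.
          deriv (deriv y1) x - (5 + 7*x^2) / (x * (1 - x^2)) * deriv y1 x + (deriv y1 x)^2 / 2
          + 16 / (1 - x^2)^2 * (3 - Ups (Kf I1 I2 I3 x) (phi1 I1 I2 x) (phi2 I2 I3 x)) = 0)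
     \<and> (\<forall>x\<in>{0<..<1}. (let K = Kf I1 I2 I3 x; p1 = phi1 I1 I2 x; p2 = phi2 I2 I3 x in
          deriv (deriv y2) x - 2 * (1 + 2*x^2) / (x * (1 - x^2)) * deriv y2 x
          + deriv y1 x * deriv y2 x / 2
          + 32 / (1 - x^2)^2 * K powr (-1/3) *
            (p1 powr (2/3) * p2 powr (1/3) - p1 powr (-1/3) * p2 powr (1/3)
             - p1 powr (2/3) * p2 powr (-2/3) + p1 powr (-4/3) * p2 powr (-2/3)) = 0))
     \<and> (\<forall>x\<in>{0<..<1}. (let K = Kf I1 I2 I3 x; p1 = phi1 I1 I2 x; p2 = phi2 I2 I3 x in
          deriv (deriv y3) x - 2 * (1 + 2*x^2) / (x * (1 - x^2)) * deriv y3 x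
          + deriv y1 x * deriv y3 x / 2
          + 32 / (1 - x^2)^2 * K powr (-1/3) *
            (p1 powr (-1/3) * p2 powr (1/3) - p1 powr (-1/3) * p2 powr (-2/3)
             - p1 powr (2/3) * p2 powr (4/3) + p1 powr (2/3) * p2 powr (-2/3)) = 0))
     \<and> phi1 I1 I2 0 = lam2 / lam1 \<and> phi2 I2 I3 0 = lam3 / lam2
     \<and> deriv y1 0 = 0 \<and> deriv y2 0 = 0 \<and> deriv y3 0 = 0
     \<and> deriv y1 1 = 0 \<and> deriv y2 1 = 0 \<and> deriv y3 1 = 0
     \<comment> \<open>hypotheses of the lemma\<close>
     \<and> 0 < \<epsilon> \<and> \<epsilon> \<le> 2 * sqrt 6
     \<and> (\<forall>x\<in>{0<..<1}. weyl_norm (Ivec I1 I2 I3) x \<le> \<epsilon>)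
     \<and> phi1 I1 I2 0 < 1 \<and> phi1 I1 I2 0 * phi2 I2 I3 0 < 1
     \<and> 1 < phi1 I1 I2 0 + phi1 I1 I2 0 * phi2 I2 I3 0
     \<and> \<delta>0 \<le> phi1 I1 I2 0 \<and> \<delta>0 \<le> phi2 I2 I3 0)
    \<longrightarrow> (\<forall>k\<in>{1,2::nat}. \<forall>x\<in>{3/4..1::real}.
          \<bar>(deriv ^^ k) y1 x\<bar> \<le> C * \<epsilon>^2 * (1 - x^2)^(4 - k)
        \<and> \<bar>(deriv ^^ k) y2 x\<bar> \<le> C * \<epsilon> * (1 - x^2)^(2 - k)
        \<and> \<bar>(deriv ^^ k) y3 x\<bar> \<le> C * \<epsilon> * (1 - x^2)^(2 - k))"
proof (intro exI[of _ 1000] allI impI, elim conjE, goal_cases)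
  case (1 I1 I2 I3 lam1 lam2 lam3 \<epsilon> y1 y2 y3)
  have "\<epsilon> \<le> 5" using \<open>\<epsilon> \<le> 2 * sqrt 6\<close> two_sqrt_6_le_5 by linarith
  with 1 show ?case by (intro log_derivative_decay) assumption+
qed

end
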